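(* Let $i\ge1$ and $n=4i$. Every ceiling coalition of the $i$-bit roof game $G_{i\text{-bit}}$ on players $\{1,\dots,n\}$ has at most two distinct direct left-shifts.
   Context: Players are $N=\{1,\dots,n\}$, $n=4i$. A coalition $S'$ is a direct left-shift of $S$ if there is $m\in S$, $2\le m\le n$, $m-1\notin S$, with $S'=(S\setminus\{m\})\cup\{m-1\}$; a left-shift of $S$ is obtained by one or more successive direct left-shifts. For $k\in\{0,\dots,2^i-1\}$ with $i$-bit binary representation $b_1\cdots b_i$, $S_{k,i}=\bigcup_{j=1}^iB_j$ where $B_j=\{4(j-1)+2,4(j-1)+3\}$ if $b_j=0$ and $B_j=\{4(j-1)+1,4(j-1)+4\}$ if $b_j=1$. The $i$-bit roof game $G_{i\text{-bit}}$ is the simple game on $N$ in which a coalition is winning iff it contains some $S_{k,i}$ or a left-shift of some $S_{k,i}$ (a canonical linear game whose roof coalitions are exactly the $S_{k,i}$). A maximal losing coalition is a losing $S$ with $S\cup\{m\}$ winning for all $m\notin S$; a ceiling coalition is a maximal losing coalition all of whose left-shifts are winning. *)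

theory Defs
  imports Main
begin

definition direct_left_shift :: "nat \<Rightarrow> nat set \<Rightarrow> nat set \<Rightarrow> bool" where
  "direct_left_shift n S S' \<longleftrightarrow>
     (\<exists>m\<in>S. 2 \<le> m \<and> m \<le> n \<and> m - 1 \<notin> S \<and> S' = insert (m - 1) (S - {m}))"

definition left_shift :: "nat \<Rightarrow> nat set \<Rightarrow> nat set \<Rightarrow> bool" where
  "left_shift n = tranclp (direct_left_shift n)"

text \<open>j-th bit (j = 1..i, b_1 most significant) of the i-bit representation of k.\<close>
definition bit_of :: "nat \<Rightarrow> nat \<Rightarrow> nat \<Rightarrow> nat" where
  "bit_of i k j = (k div 2 ^ (i - j)) mod 2"

definition block :: "nat \<Rightarrow> nat \<Rightarrow> nat \<Rightarrow> nat set" where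
  "block i k j = (if bit_of i k j = 0 then {4*(j-1)+2, 4*(j-1)+3}
                  else {4*(j-1)+1, 4*(j-1)+4})"

definition roof_coal :: "nat \<Rightarrow> nat \<Rightarrow> nat set" where
  "roof_coal i k = (\<Union>j\<in>{1..i}. block i k j)"

definition winning :: "nat \<Rightarrow> nat set \<Rightarrow> bool" where
  "winning i S \<longleftrightarrow> S \<subseteq> {1..4*i} \<and>
     (\<exists>k < 2 ^ i. roof_coal i k \<subseteq> S \<or>
        (\<exists>T. left_shift (4*i) (roof_coal i k) T \<and> T \<subseteq> S))"

definition max_losing :: "nat \<Rightarrow> nat set \<Rightarrow> bool" where
  "max_losing i S \<longleftrightarrow> S \<subseteq> {1..4*i} \<and> \<not> winning i S \<and>
     (\<forall>m\<in>{1..4*i} - S. winning i (insert m S))"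

definition ceiling :: "nat \<Rightarrow> nat set \<Rightarrow> bool" where
  "ceiling i S \<longleftrightarrow> max_losing i S \<and>
     (\<forall>T. left_shift (4*i) S T \<longrightarrow> winning i T)"

end

theory Submission
  imports Defs
begin

text \<open>Counting players up to each position, a coalition is obtained from A by left-shifts followed
  by adding players iff it dominates A prefix-wise, so S wins iff it dominates some roof coalition.
  Suppose a losing S has direct left-shifts moving players p+1 and q+1 with q \<ge> p + 4, both winning,
  say dominating the roofs of k_p and k_q. Each of these roofs is dominated by S at every position
  except p, resp. q. Splicing the bit of k_q for the block containing p into k_p yields a roof that
  agrees with the roof of k_q near p and with the roof of k_p everywhere else, hence is dominated
  by S: a contradiction. As the positions of distinct left-shifts are never adjacent, three of them
  would span at least four places.\<close>

definition prefix_card :: "nat set \<Rightarrow> nat \<Rightarrow> nat" where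
  "prefix_card A x = card (A \<inter> {..x})"

definition prefix_le :: "nat set \<Rightarrow> nat set \<Rightarrow> bool" where
  "prefix_le A B \<longleftrightarrow> (\<forall>x. prefix_card A x \<le> prefix_card B x)"

lemma prefix_le_refl: "prefix_le A A"
  by (simp add: prefix_le_def)

lemma prefix_le_trans: "prefix_le A B \<Longrightarrow> prefix_le B C \<Longrightarrow> prefix_le A C"
  unfolding prefix_le_def using le_trans by blast

lemma prefix_le_subset: "prefix_le A B \<Longrightarrow> B \<subseteq> C \<Longrightarrow> finite C \<Longrightarrow> prefix_le A C"
  unfolding prefix_le_def prefix_card_def by (meson card_mono finite_Int inf_mono order_refl le_trans)

lemma prefix_card_0: "0 \<notin> A \<Longrightarrow> prefix_card A 0 = 0"
  unfolding prefix_card_def by (simp add: Int_insert_right)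

lemma prefix_card_Suc:
  "finite A \<Longrightarrow> prefix_card A (Suc x) = prefix_card A x + (if Suc x \<in> A then 1 else 0)"
  unfolding prefix_card_def by (simp add: atMost_Suc Int_insert_right)

lemma prefix_card_mono: "finite A \<Longrightarrow> x \<le> y \<Longrightarrow> prefix_card A x \<le> prefix_card A y"
  unfolding prefix_card_def by (intro card_mono) auto

lemma prefix_card_shift:
  assumes "finite A" "Suc p \<in> A" "p \<notin> A"
  shows "prefix_card (insert p (A - {Suc p})) x = prefix_card A x + (if x = p then 1 else 0)"
proof (induction x)
  case 0
  show ?case using assms by (cases p) (auto simp: prefix_card_def Int_insert_right)
next
  case (Suc x)
  then show ?case using assms by (auto simp: prefix_card_Suc)
qed

lemma direct_left_shift_iff:
  "direct_left_shift n A A' \<longleftrightarrow>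
     (\<exists>p. Suc p \<in> A \<and> p \<notin> A \<and> 1 \<le> p \<and> Suc p \<le> n \<and> A' = insert p (A - {Suc p}))"
proof
  assume "direct_left_shift n A A'"
  then obtain m where "m \<in> A" "2 \<le> m" "m \<le> n" "m - 1 \<notin> A" "A' = insert (m - 1) (A - {m})"
    unfolding direct_left_shift_def by blast
  moreover have "Suc (m - 1) = m" using \<open>2 \<le> m\<close> by simp
  ultimately show "\<exists>p. Suc p \<in> A \<and> p \<notin> A \<and> 1 \<le> p \<and> Suc p \<le> n \<and> A' = insert p (A - {Suc p})"
    by (intro exI[of _ "m - 1"]) auto
next
  assume "\<exists>p. Suc p \<in> A \<and> p \<notin> A \<and> 1 \<le> p \<and> Suc p \<le> n \<and> A' = insert p (A - {Suc p})"
  then show "direct_left_shift n A A'"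
    unfolding direct_left_shift_def by (metis Suc_le_mono diff_Suc_1 numeral_2_eq_2 One_nat_def)
qed

lemma direct_left_shifts_eq_image:
  assumes "S \<subseteq> {1..n}"
  shows "{T. direct_left_shift n S T} =
    (\<lambda>p. insert p (S - {Suc p})) ` {p. Suc p \<in> S \<and> p \<notin> S \<and> 1 \<le> p}"
proof -
  have "Suc p \<le> n" if "Suc p \<in> S" for p using assms that by auto
  then show ?thesis unfolding direct_left_shift_iff by blast
qed

lemma direct_left_shift_prefix_le:
  assumes "direct_left_shift n A A'" "finite A"
  shows "prefix_le A A'"
  using assms prefix_card_shift by (fastforce simp: direct_left_shift_iff prefix_le_def)

lemma direct_left_shift_finite: "direct_left_shift n A A' \<Longrightarrow> finite A' \<longleftrightarrow> finite A"
  by (auto simp: direct_left_shift_iff)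

lemma left_shift_prefix_le:
  assumes "left_shift n A B" "finite A"
  shows "prefix_le A B \<and> finite B"
  using assms unfolding left_shift_def
proof (induction rule: tranclp_induct)
  case (base B)
  then show ?case using direct_left_shift_prefix_le direct_left_shift_finite by blast
next
  case (step B C)
  then show ?case using direct_left_shift_prefix_le direct_left_shift_finite prefix_le_trans by blast
qed

lemma prefix_deficit_below:
  assumes "finite A" "finite S" "0 \<notin> S" "prefix_le A S" "a \<in> A" "a \<notin> S"
  obtains p where "p \<notin> A" "p < a" "prefix_card A p < prefix_card S p"
proof -
  define P where "P x \<longleftrightarrow> prefix_card A x < prefix_card S x" for x
  have "prefix_card A 0 = 0" using assms(4) prefix_card_0[OF assms(3)] by (metis le_zero_eq prefix_le_def)
  then have "0 \<notin> A" using assms(1) by (auto simp: prefix_card_def Int_insert_right)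
  then obtain b where b: "a = Suc b" using assms(5) by (cases a) auto
  have "prefix_card A (Suc b) \<le> prefix_card S (Suc b)" using assms(4) prefix_le_def by blast
  then have "P b" using assms(5,6) b by (simp add: P_def prefix_card_Suc assms(1,2))
  define p where "p = (LEAST x. P x)"
  have "P p" "p \<le> b" using \<open>P b\<close> unfolding p_def by (auto intro: LeastI Least_le)
  moreover have "p \<noteq> 0" using \<open>P p\<close> prefix_card_0[OF assms(3)] unfolding P_def by (metis not_less_zero)
  then obtain q where q: "p = Suc q" by (cases p) auto
  have "\<not> P q" using q not_less_Least[of q P] unfolding p_def by simp
  with \<open>P p\<close> have "p \<notin> A"
    using prefix_card_Suc[OF assms(1), of q] prefix_card_Suc[OF assms(2), of q] q
    unfolding P_def by (auto split: if_splits)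
  ultimately show ?thesis using that b P_def by auto
qed

lemma direct_left_shift_into_deficit:
  assumes "finite A" "finite S" "0 \<notin> S" "prefix_le A S"
    and "p \<notin> A" "p < a" "a \<in> A" "prefix_card A p < prefix_card S p"
  obtains q where "Suc q \<in> A" "q \<notin> A" "1 \<le> q" "prefix_le (insert q (A - {Suc q})) S"
proof -
  define m where "m = (LEAST y. y \<in> A \<and> p < y)"
  have m: "m \<in> A" "p < m" using LeastI[of "\<lambda>y. y \<in> A \<and> p < y"] assms(6,7) by (auto simp: m_def)
  have below_m: "y \<notin> A" if "p < y" "y < m" for y
    using that not_less_Least[of y "\<lambda>y. y \<in> A \<and> p < y"] by (auto simp: m_def)
  obtain q where q: "m = Suc q" "p \<le> q" using m(2) by (cases m) auto
  have "q \<notin> A" using q assms(5) below_m by (cases "p = q") auto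
  have "1 \<le> p" using assms(8) prefix_card_0[OF assms(3)] by (cases p) auto
  have "A \<inter> {..q} = A \<inter> {..p}"
  proof (intro equalityI subsetI)
    fix y assume "y \<in> A \<inter> {..q}"
    then show "y \<in> A \<inter> {..p}" using below_m[of y] q(1) by (auto simp: not_le[symmetric])
  qed (use q in auto)
  then have "prefix_card A q < prefix_card S q"
    using assms(8) prefix_card_mono[OF assms(2) q(2)] by (simp add: prefix_card_def)
  then have "prefix_le (insert q (A - {Suc q})) S"
    using assms(4) prefix_card_shift[OF assms(1) m(1)[unfolded q(1)] \<open>q \<notin> A\<close>]
    by (auto simp: prefix_le_def Suc_le_eq)
  then show ?thesis using that m(1) q \<open>q \<notin> A\<close> \<open>1 \<le> p\<close> by auto
qed

lemma prefix_le_imp_direct_left_shift: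
  assumes "finite A" "A \<subseteq> {1..n}" "S \<subseteq> {1..n}" "prefix_le A S" "\<not> A \<subseteq> S"
  obtains A' where "direct_left_shift n A A'" "prefix_le A' S"
proof -
  have "finite S" "0 \<notin> S" using assms(3) finite_subset by auto
  obtain a where "a \<in> A" "a \<notin> S" using assms(5) by blast
  obtain p where p: "p \<notin> A" "p < a" "prefix_card A p < prefix_card S p"
    using prefix_deficit_below[OF assms(1) \<open>finite S\<close> \<open>0 \<notin> S\<close> assms(4) \<open>a \<in> A\<close> \<open>a \<notin> S\<close>] .
  obtain q where "Suc q \<in> A" "q \<notin> A" "1 \<le> q" "prefix_le (insert q (A - {Suc q})) S"
    using direct_left_shift_into_deficit[OF assms(1) \<open>finite S\<close> \<open>0 \<notin> S\<close> assms(4) p(1,2) \<open>a \<in> A\<close> p(3)] .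
  moreover have "Suc q \<le> n" using \<open>Suc q \<in> A\<close> assms(2) by auto
  ultimately have "direct_left_shift n A (insert q (A - {Suc q}))"
    unfolding direct_left_shift_iff by blast
  then show ?thesis using \<open>prefix_le (insert q (A - {Suc q})) S\<close> by (rule that)
qed

lemma shifted_subset_iff_prefix_le:
  assumes "A \<subseteq> {1..n}" "S \<subseteq> {1..n}"
  shows "(A \<subseteq> S \<or> (\<exists>T. left_shift n A T \<and> T \<subseteq> S)) \<longleftrightarrow> prefix_le A S"
proof
  have "finite A" "finite S" using assms finite_subset by auto
  assume "A \<subseteq> S \<or> (\<exists>T. left_shift n A T \<and> T \<subseteq> S)"
  then show "prefix_le A S"
  proof
    assume "A \<subseteq> S"
    then show ?thesis using prefix_le_subset[OF prefix_le_refl _ \<open>finite S\<close>] by blast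
  next
    assume "\<exists>T. left_shift n A T \<and> T \<subseteq> S"
    then obtain T where "left_shift n A T" "T \<subseteq> S" by blast
    have "prefix_le A T" using left_shift_prefix_le[OF \<open>left_shift n A T\<close> \<open>finite A\<close>] ..
    then show ?thesis using prefix_le_subset \<open>T \<subseteq> S\<close> \<open>finite S\<close> by blast
  qed
next
  show "prefix_le A S \<Longrightarrow> A \<subseteq> S \<or> (\<exists>T. left_shift n A T \<and> T \<subseteq> S)"
    using assms(1)
  proof (induction "\<Sum>A" arbitrary: A rule: less_induct)
    case less
    show ?case
    proof (cases "A \<subseteq> S")
      case False
      have "finite A" using less.prems(2) finite_subset by auto
      obtain A' where A': "direct_left_shift n A A'" "prefix_le A' S"
        using prefix_le_imp_direct_left_shift[OF \<open>finite A\<close> less.prems(2) assms(2) less.prems(1) False] .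
      obtain q where q: "Suc q \<in> A" "q \<notin> A" "1 \<le> q" "Suc q \<le> n"
        and A'_def: "A' = insert q (A - {Suc q})"
        using A'(1) by (auto simp: direct_left_shift_iff)
      have "\<Sum>A = Suc q + \<Sum>(A - {Suc q})" using q(1) \<open>finite A\<close> by (simp add: sum.remove)
      moreover have "\<Sum>A' = q + \<Sum>(A - {Suc q})" using q(2) \<open>finite A\<close> by (simp add: A'_def)
      moreover have "A' \<subseteq> {1..n}" using q less.prems(2) by (auto simp: A'_def)
      ultimately have "A' \<subseteq> S \<or> (\<exists>T. left_shift n A' T \<and> T \<subseteq> S)"
        using less.hyps[of A'] A'(2) by simp
      moreover have "left_shift n A A'" using A'(1) by (simp add: left_shift_def)
      moreover have "left_shift n A T" if "left_shift n A' T" for T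
        using A'(1) that unfolding left_shift_def by (rule tranclp_into_tranclp2)
      ultimately show ?thesis by blast
    qed simp
  qed
qed

lemma block_subset: "1 \<le> j \<Longrightarrow> block i k j \<subseteq> {4*j-3..4*j}"
  unfolding block_def by auto

lemma card_block: "card (block i k j) = 2"
  unfolding block_def by auto

lemma roof_coal_subset: "roof_coal i k \<subseteq> {1..4*i}"
  unfolding roof_coal_def block_def by auto

lemma winning_iff_prefix_le:
  "winning i S \<longleftrightarrow> S \<subseteq> {1..4*i} \<and> (\<exists>k<2^i. prefix_le (roof_coal i k) S)"
  unfolding winning_def using shifted_subset_iff_prefix_le[OF roof_coal_subset] by blast

lemma prefix_card_roof_coal:
  "prefix_card (roof_coal i k) x = (\<Sum>j\<in>{1..i}. prefix_card (block i k j) x)"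
proof -
  have "roof_coal i k \<inter> {..x} = (\<Union>j\<in>{1..i}. block i k j \<inter> {..x})"
    unfolding roof_coal_def by auto
  moreover have "block i k j \<inter> block i k j' = {}" if "j \<in> {1..i}" "j' \<in> {1..i}" "j \<noteq> j'" for j j'
    using that block_subset[of j i k] block_subset[of j' i k] by fastforce
  then have "card (\<Union>j\<in>{1..i}. block i k j \<inter> {..x}) = (\<Sum>j\<in>{1..i}. card (block i k j \<inter> {..x}))"
    by (intro card_UN_disjoint) (auto simp: block_def)
  ultimately show ?thesis unfolding prefix_card_def by simp
qed

lemma prefix_card_block_outside:
  assumes "1 \<le> j" "x \<notin> {4*j-3..4*j}"
  shows "prefix_card (block i k j) x = prefix_card (block i k' j) x"
proof (cases "x < 4*j-3")
  case True
  then have "block i k j \<inter> {..x} = {}" "block i k' j \<inter> {..x} = {}"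
    using block_subset[OF assms(1)] by fastforce+
  then show ?thesis by (simp add: prefix_card_def)
next
  case False
  then have "block i k j \<inter> {..x} = block i k j" "block i k' j \<inter> {..x} = block i k' j"
    using block_subset[OF assms(1)] assms(2) by fastforce+
  then show ?thesis by (simp add: prefix_card_def card_block)
qed

lemma prefix_card_roof_coal_eq:
  assumes "\<And>j. j \<in> {1..i} \<Longrightarrow> x \<in> {4*j-3..4*j} \<Longrightarrow> bit_of i k j = bit_of i k' j"
  shows "prefix_card (roof_coal i k) x = prefix_card (roof_coal i k') x"
  unfolding prefix_card_roof_coal
proof (rule sum.cong)
  fix j assume "j \<in> {1..i}"
  then show "prefix_card (block i k j) x = prefix_card (block i k' j) x"
    using assms[of j] prefix_card_block_outside[of j x i k k'] by (cases "x \<in> {4*j-3..4*j}") (auto simp: block_def)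
qed simp

lemma bit_of_eq_bit: "bit_of i k j = (if bit k (i - j) then 1 else 0)"
  unfolding bit_of_def by (simp add: bit_iff_odd odd_iff_mod_2_eq_one)

lemma exists_bit_of_splice:
  assumes "k < 2^i" "k' < 2^i" "j0 \<in> {1..i}"
  obtains k'' where "k'' < 2^i" "bit_of i k'' j0 = bit_of i k' j0"
    "\<And>j. j \<in> {1..i} \<Longrightarrow> j \<noteq> j0 \<Longrightarrow> bit_of i k'' j = bit_of i k j"
proof
  define k'' where "k'' = (if bit k' (i - j0) then set_bit (i - j0) k else unset_bit (i - j0) k)"
  have "i - j0 < i" using assms(3) by auto
  then have "take_bit i k'' = k''"
    using assms(1) unfolding k''_def
    by (auto simp: take_bit_set_bit_eq take_bit_unset_bit_eq take_bit_nat_eq_self_iff[symmetric])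
  then show "k'' < 2^i" by (simp add: take_bit_nat_eq_self_iff)
  show "bit_of i k'' j0 = bit_of i k' j0"
    unfolding bit_of_eq_bit k''_def by (auto simp: bit_set_bit_iff bit_unset_bit_iff)
  fix j assume "j \<in> {1..i}" "j \<noteq> j0"
  then have "i - j0 \<noteq> i - j" using assms(3) by auto
  then show "bit_of i k'' j = bit_of i k j"
    unfolding bit_of_eq_bit k''_def by (auto simp: bit_set_bit_iff bit_unset_bit_iff)
qed

lemma winning_left_shifts_close:
  assumes "S \<subseteq> {1..4*i}" "\<not> winning i S"
    and p: "Suc p \<in> S" "p \<notin> S" "1 \<le> p" "winning i (insert p (S - {Suc p}))"
    and q: "Suc q \<in> S" "q \<notin> S" "winning i (insert q (S - {Suc q}))"
  shows "q < p + 4"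
proof (rule ccontr)
  assume far: "\<not> q < p + 4"
  have "finite S" using assms(1) finite_subset by auto
  have below_shift: "prefix_card B x \<le> prefix_card S x"
    if "prefix_le B (insert r (S - {Suc r}))" "Suc r \<in> S" "r \<notin> S" "x \<noteq> r" for B r x
    using that prefix_card_shift[OF \<open>finite S\<close> that(2,3), of x] by (metis prefix_le_def add_0_right)
  obtain kp where kp: "kp < 2^i" "prefix_le (roof_coal i kp) (insert p (S - {Suc p}))"
    using p(4) winning_iff_prefix_le by blast
  obtain kq where kq: "kq < 2^i" "prefix_le (roof_coal i kq) (insert q (S - {Suc q}))"
    using q(3) winning_iff_prefix_le by blast
  define j0 where "j0 = (p + 3) div 4"
  have j0: "j0 \<in> {1..i}" "p \<in> {4*j0-3..4*j0}" "4*j0 < q"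
    using p(1,3) far assms(1) unfolding j0_def by auto
  obtain k where k: "k < 2^i" "bit_of i k j0 = bit_of i kq j0"
    "\<And>j. j \<in> {1..i} \<Longrightarrow> j \<noteq> j0 \<Longrightarrow> bit_of i k j = bit_of i kp j"
    using exists_bit_of_splice[OF kp(1) kq(1) j0(1)] by metis
  have block_unique: "j = j0" if "x \<in> {4*j-3..4*j}" "x \<in> {4*j0-3..4*j0}" "1 \<le> j" for j x
    using that j0(1) by auto
  have "prefix_le (roof_coal i k) S"
    unfolding prefix_le_def
  proof
    fix x
    show "prefix_card (roof_coal i k) x \<le> prefix_card S x"
    proof (cases "x \<in> {4*j0-3..4*j0}")
      case True
      then have "prefix_card (roof_coal i k) x = prefix_card (roof_coal i kq) x"
        using block_unique k(2) by (intro prefix_card_roof_coal_eq) auto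
      also have "\<dots> \<le> prefix_card S x"
        using below_shift[OF kq(2) q(1,2)] True j0(3) by auto
      finally show ?thesis .
    next
      case False
      then have "prefix_card (roof_coal i k) x = prefix_card (roof_coal i kp) x"
        using k(3) by (intro prefix_card_roof_coal_eq) auto
      also have "\<dots> \<le> prefix_card S x"
        using below_shift[OF kp(2) p(1,2)] False j0(2) by auto
      finally show ?thesis .
    qed
  qed
  then show False using assms(1,2) k(1) winning_iff_prefix_le by blast
qed

lemma obtain_three_increasing:
  fixes M :: "'a::linorder set"
  assumes "finite M" "3 \<le> card M"
  obtains a b c where "a \<in> M" "b \<in> M" "c \<in> M" "a < b" "b < c"
proof -
  let ?xs = "sorted_list_of_set M"
  have len: "3 \<le> length ?xs" and set: "set ?xs = M" and sorted: "sorted_wrt (<) ?xs"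
    using assms by simp_all
  have "?xs ! 0 < ?xs ! 1" "?xs ! 1 < ?xs ! 2"
    using len sorted_wrt_nth_less[OF sorted, of 0 1] sorted_wrt_nth_less[OF sorted, of 1 2]
    by simp_all
  moreover have "?xs ! 0 \<in> M" "?xs ! 1 \<in> M" "?xs ! 2 \<in> M"
    using len nth_mem[of _ ?xs] unfolding set by simp_all
  ultimately show ?thesis using that by blast
qed

theorem lemma3:
  fixes i :: nat and S :: "nat set"
  assumes "1 \<le> i" and "ceiling i S"
  shows "card {T. direct_left_shift (4*i) S T} \<le> 2"
proof -
  have S: "S \<subseteq> {1..4*i}" "\<not> winning i S"
    and shifts_win: "\<And>T. direct_left_shift (4*i) S T \<Longrightarrow> winning i T"
    using assms(2) by (auto simp: ceiling_def max_losing_def left_shift_def)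
  define P where "P = {p. Suc p \<in> S \<and> p \<notin> S \<and> 1 \<le> p}"
  have shifts: "{T. direct_left_shift (4*i) S T} = (\<lambda>p. insert p (S - {Suc p})) ` P"
    unfolding P_def using direct_left_shifts_eq_image[OF S(1)] .
  have "P \<subseteq> {..4*i}" using S(1) unfolding P_def by force
  then have "finite P" by (rule finite_subset) simp
  have "card P \<le> 2"
  proof (rule ccontr)
    assume "\<not> card P \<le> 2"
    then obtain a b c where abc: "a \<in> P" "b \<in> P" "c \<in> P" "a < b" "b < c"
      using obtain_three_increasing[OF \<open>finite P\<close>] by (metis not_less_eq_eq numeral_2_eq_2 numeral_3_eq_3)
    have "b \<noteq> Suc a" "c \<noteq> Suc b" using abc(1-3) by (auto simp: P_def)
    then have "a + 4 \<le> c" using abc(4,5) by linarith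
    moreover have "winning i (insert p (S - {Suc p}))" if "p \<in> P" for p
      using shifts_win shifts that by blast
    ultimately show False
      using winning_left_shifts_close[OF S, of a c] abc(1,3) unfolding P_def by auto
  qed
  then show ?thesis
    unfolding shifts using card_image_le[OF \<open>finite P\<close>] le_trans by blast
qed

end
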